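(* Let $G=(V,E)$ be a simple connected graph with $n=|V|$ vertices and diameter $d=\mathrm{diam}(G)$. Suppose $G$ has a dominating set of size $\gamma$. Then the pebbling number of $G$ satisfies $$f(G) \leq 2^{d+1}\gamma + n - 3\gamma + 1.$$
   Context: A dominating set of $G$ is a set $S\subseteq V$ such that every vertex not in $S$ is adjacent to at least one vertex of $S$. A distribution of pebbles on $G$ is a function $D: V \to \mathbb{N}=\{0,1,2,\dots\}$; its size is $|D|=\sum_{v\in V} D(v)$. A pebbling step removes two pebbles from some vertex and places one pebble on an adjacent vertex. For a root vertex $v$, $D$ is $v$-solvable if, after some finite sequence of pebbling steps starting from $D$, at least one pebble is on $v$; $D$ is solvable if it is $v$-solvable for every $v\in V$. The pebbling number $f(G)$ is the smallest integer $N$ such that every distribution of size $N$ on $G$ is solvable. *)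

theory Defs
  imports Main
begin

definition simple_graph :: "'a set \<Rightarrow> ('a \<Rightarrow> 'a \<Rightarrow> bool) \<Rightarrow> bool" where
  "simple_graph V E \<longleftrightarrow> finite V \<and> V \<noteq> {} \<and>
     (\<forall>u v. E u v \<longrightarrow> u \<in> V \<and> v \<in> V) \<and>
     (\<forall>u v. E u v \<longrightarrow> E v u) \<and> (\<forall>v. \<not> E v v)"

definition connected_graph :: "'a set \<Rightarrow> ('a \<Rightarrow> 'a \<Rightarrow> bool) \<Rightarrow> bool" where
  "connected_graph V E \<longleftrightarrow> (\<forall>u\<in>V. \<forall>v\<in>V. E\<^sup>*\<^sup>* u v)"

definition gdist :: "('a \<Rightarrow> 'a \<Rightarrow> bool) \<Rightarrow> 'a \<Rightarrow> 'a \<Rightarrow> nat" where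
  "gdist E u v = (LEAST k. (E ^^ k) u v)"

definition diam :: "'a set \<Rightarrow> ('a \<Rightarrow> 'a \<Rightarrow> bool) \<Rightarrow> nat" where
  "diam V E = Max {gdist E u v | u v. u \<in> V \<and> v \<in> V}"

definition dominating_set :: "'a set \<Rightarrow> ('a \<Rightarrow> 'a \<Rightarrow> bool) \<Rightarrow> 'a set \<Rightarrow> bool" where
  "dominating_set V E S \<longleftrightarrow> S \<subseteq> V \<and> (\<forall>v\<in>V - S. \<exists>s\<in>S. E v s)"

definition distribution :: "'a set \<Rightarrow> ('a \<Rightarrow> nat) \<Rightarrow> bool" where
  "distribution V D \<longleftrightarrow> (\<forall>v. v \<notin> V \<longrightarrow> D v = 0)"

definition dsize :: "'a set \<Rightarrow> ('a \<Rightarrow> nat) \<Rightarrow> nat" where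
  "dsize V D = (\<Sum>v\<in>V. D v)"

definition pebbling_step :: "('a \<Rightarrow> 'a \<Rightarrow> bool) \<Rightarrow> ('a \<Rightarrow> nat) \<Rightarrow> ('a \<Rightarrow> nat) \<Rightarrow> bool" where
  "pebbling_step E D D' \<longleftrightarrow>
     (\<exists>u w. E u w \<and> D u \<ge> 2 \<and> D' = D(u := D u - 2, w := D w + 1))"

definition solvable_at :: "('a \<Rightarrow> 'a \<Rightarrow> bool) \<Rightarrow> ('a \<Rightarrow> nat) \<Rightarrow> 'a \<Rightarrow> bool" where
  "solvable_at E D r \<longleftrightarrow> (\<exists>D'. (pebbling_step E)\<^sup>*\<^sup>* D D' \<and> D' r \<ge> 1)"

definition solvable :: "'a set \<Rightarrow> ('a \<Rightarrow> 'a \<Rightarrow> bool) \<Rightarrow> ('a \<Rightarrow> nat) \<Rightarrow> bool" where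
  "solvable V E D \<longleftrightarrow> (\<forall>r\<in>V. solvable_at E D r)"

definition pebbling_number :: "'a set \<Rightarrow> ('a \<Rightarrow> 'a \<Rightarrow> bool) \<Rightarrow> nat" where
  "pebbling_number V E = (LEAST N. \<forall>D. distribution V D \<and> dsize V D = N \<longrightarrow> solvable V E D)"

end

theory Submission
  imports Defs
begin

text \<open>Assign every vertex to a dominator s of S and let C s be its class. Since the classes
  partition V, a distribution with at least 2^(d+1)|S| + |V| - 3|S| + 1 pebbles has, by
  pigeonhole, a class C s holding at least 2^(d+1) + |C s| - 2 pebbles. Every vertex v of
  C s - {s} is adjacent to s and can send floor(D v / 2) pebbles to s, and counting shows
  that at least 2^d pebbles then sit on s. From there one pebble reaches any vertex along a
  shortest walk, whose length is at most d.\<close>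

lemma pebbling_steps_move:
  assumes "E u w" "u \<noteq> w" "2 * m \<le> D u"
  shows "(pebbling_step E)\<^sup>*\<^sup>* D (D(u := D u - 2 * m, w := D w + m))"
  using assms(3)
proof (induction m)
  case 0
  then show ?case by simp
next
  case (Suc m)
  define D1 where "D1 = D(u := D u - 2 * m, w := D w + m)"
  have reach_D1: "(pebbling_step E)\<^sup>*\<^sup>* D D1"
    unfolding D1_def using Suc.prems by (intro Suc.IH) simp
  have "D1 u \<ge> 2" using Suc.prems assms(2) unfolding D1_def by simp
  then have "pebbling_step E D1 (D1(u := D1 u - 2, w := D1 w + 1))"
    unfolding pebbling_step_def using assms(1) by blast
  moreover have "D1(u := D1 u - 2, w := D1 w + 1) = D(u := D u - 2 * Suc m, w := D w + Suc m)"
    using assms(2) unfolding D1_def by (auto simp: fun_eq_iff)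
  ultimately show ?case using reach_D1 by (metis rtranclp.rtrancl_into_rtrancl)
qed

lemma pebbling_steps_along_walk:
  assumes "\<And>v. \<not> E v v" "(E ^^ k) s r" "2 ^ k * m \<le> D s"
  shows "\<exists>D'. (pebbling_step E)\<^sup>*\<^sup>* D D' \<and> m \<le> D' r"
  using assms(2,3)
proof (induction k arbitrary: s D)
  case 0
  then show ?case by auto
next
  case (Suc k)
  obtain w where w: "E s w" "(E ^^ k) w r" using Suc.prems(1) relpowp_Suc_D2 by metis
  define D1 where "D1 = D(s := D s - 2 * (2 ^ k * m), w := D w + 2 ^ k * m)"
  have reach_D1: "(pebbling_step E)\<^sup>*\<^sup>* D D1"
    unfolding D1_def using pebbling_steps_move w(1) assms(1) Suc.prems(2)
    by (metis mult.assoc power_Suc)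
  have "2 ^ k * m \<le> D1 w" unfolding D1_def by simp
  then obtain D' where "(pebbling_step E)\<^sup>*\<^sup>* D1 D'" "m \<le> D' r"
    using Suc.IH[OF w(2)] by blast
  with reach_D1 show ?case by (meson rtranclp_trans)
qed

lemma pebbling_steps_gather:
  assumes "finite A" "s \<notin> A" "\<forall>v\<in>A. E v s"
  shows "\<exists>D'. (pebbling_step E)\<^sup>*\<^sup>* D D' \<and> D s + (\<Sum>v\<in>A. D v div 2) \<le> D' s
           \<and> (\<forall>x. x \<notin> A \<and> x \<noteq> s \<longrightarrow> D' x = D x)"
  using assms
proof (induction A rule: finite_induct)
  case empty
  then show ?case by auto
next
  case (insert a A)
  then obtain D1 where D1: "(pebbling_step E)\<^sup>*\<^sup>* D D1" "D s + (\<Sum>v\<in>A. D v div 2) \<le> D1 s"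
    "\<forall>x. x \<notin> A \<and> x \<noteq> s \<longrightarrow> D1 x = D x" by auto
  have "a \<noteq> s" using insert.prems by auto
  have "D1 a = D a" using D1(3) insert.hyps(2) \<open>a \<noteq> s\<close> by auto
  define D2 where "D2 = D1(a := D1 a - 2 * (D a div 2), s := D1 s + D a div 2)"
  have "(pebbling_step E)\<^sup>*\<^sup>* D1 D2"
    unfolding D2_def using pebbling_steps_move[of E a s "D a div 2" D1] insert.prems
      \<open>a \<noteq> s\<close> \<open>D1 a = D a\<close> by simp
  then have "(pebbling_step E)\<^sup>*\<^sup>* D D2" using D1(1) by (rule rtranclp_trans[rotated])
  moreover have "D s + (\<Sum>v\<in>insert a A. D v div 2) \<le> D2 s"
    unfolding D2_def using D1(2) insert.hyps by simp
  moreover have "\<forall>x. x \<notin> insert a A \<and> x \<noteq> s \<longrightarrow> D2 x = D x"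
    unfolding D2_def using D1(3) by simp
  ultimately show ?case by blast
qed

lemma sum_le_double_sum_div2_plus_card:
  fixes f :: "'a \<Rightarrow> nat"
  shows "(\<Sum>v\<in>A. f v) \<le> 2 * (\<Sum>v\<in>A. f v div 2) + card A"
proof -
  have "(\<Sum>v\<in>A. f v) \<le> (\<Sum>v\<in>A. 2 * (f v div 2) + 1)"
    by (intro sum_mono) auto
  also have "\<dots> = 2 * (\<Sum>v\<in>A. f v div 2) + card A"
    by (simp only: sum.distrib sum_distrib_left) simp
  finally show ?thesis .
qed

lemma solvable_at_backward:
  assumes "(pebbling_step E)\<^sup>*\<^sup>* D D'" "solvable_at E D' r"
  shows "solvable_at E D r"
  using assms unfolding solvable_at_def by (meson rtranclp_trans)

lemma relpowp_gdist:
  assumes "E\<^sup>*\<^sup>* u v"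
  shows "(E ^^ gdist E u v) u v"
proof -
  obtain k where "(E ^^ k) u v" using assms rtranclp_imp_relpowp by metis
  then show ?thesis unfolding gdist_def by (rule LeastI)
qed

lemma gdist_le_diam:
  assumes "finite V" "u \<in> V" "v \<in> V"
  shows "gdist E u v \<le> diam V E"
proof -
  have "{gdist E u v | u v. u \<in> V \<and> v \<in> V} = (\<lambda>(u, v). gdist E u v) ` (V \<times> V)" by auto
  then have "finite {gdist E u v | u v. u \<in> V \<and> v \<in> V}" using assms(1) by simp
  then show ?thesis unfolding diam_def using assms(2,3) by (intro Max_ge) blast+
qed

lemma solvable_if_2_pow_diam_at_vertex:
  assumes "finite V" "connected_graph V E" "\<And>v. \<not> E v v"
    and "s \<in> V" "2 ^ diam V E \<le> D s"
  shows "solvable V E D"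
  unfolding solvable_def solvable_at_def
proof
  fix r assume "r \<in> V"
  then have "E\<^sup>*\<^sup>* s r" using assms(2,4) unfolding connected_graph_def by blast
  then have walk: "(E ^^ gdist E s r) s r" by (rule relpowp_gdist)
  have "(2::nat) ^ gdist E s r \<le> 2 ^ diam V E"
    using gdist_le_diam[OF assms(1,4) \<open>r \<in> V\<close>] by (rule power_increasing) simp
  then have "2 ^ gdist E s r * 1 \<le> D s" using assms(5) by linarith
  then show "\<exists>D'. (pebbling_step E)\<^sup>*\<^sup>* D D' \<and> 1 \<le> D' r"
    using pebbling_steps_along_walk[OF assms(3) walk] by blast
qed

lemma dominating_set_dominator:
  assumes "dominating_set V E S"
  obtains g where "\<And>v. v \<in> V \<Longrightarrow> g v \<in> S"
    "\<And>v. v \<in> S \<Longrightarrow> g v = v" "\<And>v. v \<in> V - S \<Longrightarrow> E v (g v)"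
proof -
  obtain h where "\<forall>v\<in>V - S. h v \<in> S \<and> E v (h v)"
    using assms unfolding dominating_set_def by metis
  then show thesis
    by (intro that[of "\<lambda>v. if v \<in> S then v else h v"]) auto
qed

lemma sum_less_sum_ex_less:
  fixes f g :: "'a \<Rightarrow> 'b::ordered_comm_monoid_add"
  assumes "sum f A < sum g A"
  shows "\<exists>x\<in>A. \<not> g x \<le> f x"
proof (rule ccontr)
  assume "\<not> ?thesis"
  then have "sum g A \<le> sum f A" by (intro sum_mono) auto
  with assms show False by (simp add: leD)
qed

lemma solvable_if_dominating_set:
  assumes "simple_graph V E" "connected_graph V E" "dominating_set V E S"
    and "2 ^ (diam V E + 1) * card S + card V + 1 \<le> dsize V D + 3 * card S"
  shows "solvable V E D"
proof -
  have "finite V" "\<And>v. \<not> E v v" using assms(1) unfolding simple_graph_def by auto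
  have "S \<subseteq> V" using assms(3) unfolding dominating_set_def by simp
  then have "finite S" using \<open>finite V\<close> finite_subset by blast
  obtain g where g: "\<And>v. v \<in> V \<Longrightarrow> g v \<in> S" "\<And>v. v \<in> S \<Longrightarrow> g v = v"
    "\<And>v. v \<in> V - S \<Longrightarrow> E v (g v)"
    using dominating_set_dominator[OF assms(3)] by blast
  define C where "C s = {v \<in> V. g v = s}" for s
  define P :: nat where "P = 2 ^ diam V E"
  have "g ` V \<subseteq> S" using g(1) by auto
  then have "(\<Sum>s\<in>S. \<Sum>v\<in>C s. D v) = dsize V D" "(\<Sum>s\<in>S. card (C s)) = card V"
    using sum.group[OF \<open>finite V\<close> \<open>finite S\<close>, of g D] sum.group[OF \<open>finite V\<close> \<open>finite S\<close>, of g "\<lambda>_. 1::nat"]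
    unfolding C_def dsize_def by simp_all
  then have "(\<Sum>s\<in>S. 2 * P + card (C s)) < (\<Sum>s\<in>S. (\<Sum>v\<in>C s. D v) + 3)"
    using assms(4) unfolding P_def by (simp add: sum.distrib sum_distrib_left mult.commute)
  then obtain s where "s \<in> S" and heavy: "2 * P + card (C s) \<le> (\<Sum>v\<in>C s. D v) + 2"
    using sum_less_sum_ex_less by fastforce
  define A where "A = C s - {s}"
  have "s \<in> V" using \<open>s \<in> S\<close> \<open>S \<subseteq> V\<close> by auto
  have "finite A" unfolding A_def C_def using \<open>finite V\<close> by simp
  have C_s: "C s = insert s A" "s \<notin> A"
    unfolding A_def C_def using \<open>s \<in> V\<close> \<open>s \<in> S\<close> g(2) by auto
  have "\<forall>v\<in>A. E v s"
    unfolding A_def C_def using g(2,3) by fastforce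
  then obtain D' where D': "(pebbling_step E)\<^sup>*\<^sup>* D D'" "D s + (\<Sum>v\<in>A. D v div 2) \<le> D' s"
    using pebbling_steps_gather[OF \<open>finite A\<close> C_s(2)] by blast
  have "P \<le> D' s"
    using heavy D'(2) sum_le_double_sum_div2_plus_card[of D A] \<open>finite A\<close> C_s by simp
  then have "solvable V E D'"
    using solvable_if_2_pow_diam_at_vertex[OF \<open>finite V\<close> assms(2) \<open>\<And>v. \<not> E v v\<close> \<open>s \<in> V\<close>]
    unfolding P_def by blast
  then show ?thesis
    using solvable_at_backward[OF D'(1)] unfolding solvable_def by blast
qed

theorem theorem4:
  fixes V :: "'a set" and E :: "'a \<Rightarrow> 'a \<Rightarrow> bool" and S :: "'a set"
  assumes "simple_graph V E"
    and "connected_graph V E"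
    and "dominating_set V E S"
  shows "int (pebbling_number V E)
           \<le> 2 ^ (diam V E + 1) * int (card S) + int (card V) - 3 * int (card S) + 1"
proof -
  define N where "N = 2 ^ (diam V E + 1) * card S + card V + 1 - 3 * card S"
  have "card S \<le> card V"
    using assms(1,3) card_mono unfolding simple_graph_def dominating_set_def by blast
  moreover have "2 * card S \<le> 2 ^ (diam V E + 1) * card S"
    by (simp add: mult_le_mono1)
  ultimately have N: "N + 3 * card S = 2 ^ (diam V E + 1) * card S + card V + 1"
    unfolding N_def by linarith
  have "pebbling_number V E \<le> N"
    unfolding pebbling_number_def
    using solvable_if_dominating_set[OF assms] N by (intro Least_le) simp
  then have "int (pebbling_number V E) + 3 * int (card S) \<le> int (N + 3 * card S)" by simp
  then show ?thesis unfolding N by simp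
qed

end
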